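(* Let $M$ be a right $\ddot{\mathbb H}_\ell$-module. The linear map $\Psi_s: M\otimes_{\mathbb H_\ell}\mathcal V_s^{\otimes\ell}\to M\otimes_{\mathbb H_\ell}\mathcal V_{\tau s}^{\otimes\ell}$ given by $$\Psi_s(w\otimes v_{j_1}\otimes\cdots\otimes v_{j_\ell})=wX_1^{-\delta_{j_1,\kappa}}X_2^{-\delta_{j_2,\kappa}}\cdots X_\ell^{-\delta_{j_\ell,\kappa}}\otimes v_{j_1+1}\otimes\cdots\otimes v_{j_\ell+1}$$ for all $w\in M$ and all $j_1,\dots,j_\ell\in\{1,\dots,\kappa\}$ (with the convention $v_{\kappa+1}=v_1$) is well defined.
   Context: Fix integers $m,n\geqslant0$, $m\neq n$, $\kappa=m+n$; $q\in\mathbb C^\times$ not a root of unity, $\zeta\in\mathbb C^\times$, $\ell\geqslant1$. A parity sequence $s=(s_1,\dots,s_\kappa)\in\{\pm1\}^\kappa$ has exactly $m$ entries $1$; $\tau s=(s_\kappa,s_1,\dots,s_{\kappa-1})$. For a parity sequence $t$, $\mathcal V_t$ is the superspace with basis $v_1,\dots,v_\kappa$ and $|v_j|=(1-t_j)/2$; tensor products are super tensor products. The Hecke algebra $\mathbb H_\ell$ (generated by $T_i^{\pm1}$, $1\leqslant i<\ell$, with $(T_i+1)(T_i-q^2)=0$ and braid relations) acts on $\mathcal V_t^{\otimes\ell}$ by letting $T_i$ act on factors $i,i+1$ via $\mathcal T(v_a\otimes v_a)=t_aq^{1+t_a}v_a\otimes v_a$, $\mathcal T(v_a\otimes v_b)=(-1)^{|v_a||v_b|}qv_b\otimes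 v_a$ ($a<b$), $\mathcal T(v_a\otimes v_b)=(-1)^{|v_a||v_b|}qv_b\otimes v_a+(q^2-1)v_a\otimes v_b$ ($a>b$). $\ddot{\mathbb H}_\ell$ is the double affine Hecke algebra generated by $T_i^{\pm1}$ ($1\leqslant i<\ell$), $X_j^{\pm1},Y_j^{\pm1}$ ($1\leqslant j\leqslant\ell$) with relations: $T_iT_i^{-1}=T_i^{-1}T_i=1$, $(T_i+1)(T_i-q^2)=0$, $T_iT_{i+1}T_i=T_{i+1}T_iT_{i+1}$, $T_iT_j=T_jT_i$ ($|i-j|>1$); the $X_j^{\pm1}$ commute and are mutually inverse, likewise the $Y_j^{\pm1}$; $X_0Y_1=\zeta Y_1X_0$ with $X_0=X_1\cdots X_\ell$; $T_iX_iT_i=q^2X_{i+1}$, $T_i^{-1}Y_iT_i^{-1}=q^{-2}Y_{i+1}$, $X_2Y_1^{-1}X_2^{-1}Y_1=q^{-2}T_1^2$; $X_jT_i=T_iX_j$ and $Y_jT_i=T_iY_j$ for $j\neq i,i+1$. The tensor products are over $\mathbb H_\ell\subset\ddot{\mathbb H}_\ell$. *)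

theory Defs
  imports Complex_Main "HOL-Library.Function_Algebras"
begin

text \<open>Index tuples (j_1,...,j_l) with entries in {1..kappa}, as lists (position p = index p+1).\<close>
definition idx :: "nat \<Rightarrow> nat \<Rightarrow> nat list set" where
  "idx \<kappa> l = {J. length J = l \<and> set J \<subseteq> {1..\<kappa>}}"

definition parity_seq :: "nat \<Rightarrow> nat \<Rightarrow> (nat \<Rightarrow> int) \<Rightarrow> bool" where
  "parity_seq \<kappa> m s \<longleftrightarrow> (\<forall>j\<in>{1..\<kappa>}. s j = 1 \<or> s j = -1) \<and> card {j\<in>{1..\<kappa>}. s j = 1} = m"

definition tau :: "nat \<Rightarrow> (nat \<Rightarrow> int) \<Rightarrow> nat \<Rightarrow> int" where
  "tau \<kappa> s = (\<lambda>j. if j = 1 then s \<kappa> else s (j - 1))"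

definition par :: "(nat \<Rightarrow> int) \<Rightarrow> nat \<Rightarrow> int" where
  "par t a = (1 - t a) div 2"

text \<open>Right action of a word: act_seq [a1,...,ak] w = w a1 a2 ... ak.\<close>
definition act_seq :: "('m \<Rightarrow> 'm) list \<Rightarrow> 'm \<Rightarrow> 'm" where
  "act_seq fs w = fold (\<lambda>f u. f u) fs w"

text \<open>Elements of M (x)_C V^{(x)l}: functions from index tuples to M (supported on idx);
  sing J w is the elementary tensor w (x) v_{j_1} (x) ... (x) v_{j_l}.\<close>
definition sing :: "nat list \<Rightarrow> 'm::zero \<Rightarrow> nat list \<Rightarrow> 'm" where
  "sing J w = (\<lambda>K. if K = J then w else 0)"

definition fscale :: "(complex \<Rightarrow> 'm \<Rightarrow> 'm) \<Rightarrow> complex \<Rightarrow> (nat list \<Rightarrow> 'm) \<Rightarrow> nat list \<Rightarrow> 'm" where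
  "fscale scale c F = (\<lambda>K. scale c (F K))"

definition swap_at :: "nat list \<Rightarrow> nat \<Rightarrow> nat list" where
  "swap_at J i = J[i - 1 := J ! i, i := J ! (i - 1)]"

text \<open>Coefficient of v_K in T_i (v_J) for the Hecke action on V_t^{(x)l} (T_i acting on factors i,i+1).\<close>
definition hc :: "complex \<Rightarrow> (nat \<Rightarrow> int) \<Rightarrow> nat \<Rightarrow> nat list \<Rightarrow> nat list \<Rightarrow> complex" where
  "hc q t i K J =
    (let a = J ! (i - 1); b = J ! i;
         sg = (-1::complex) ^ nat (par t a * par t b) in
     if a = b then (if K = J then of_int (t a) * q powi (1 + t a) else 0)
     else if a < b then (if K = swap_at J i then sg * q else 0)
     else (if K = swap_at J i then sg * q else 0) + (if K = J then q^2 - 1 else 0))"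

definition Tact :: "(complex \<Rightarrow> 'm::ab_group_add \<Rightarrow> 'm) \<Rightarrow> nat \<Rightarrow> nat \<Rightarrow> complex \<Rightarrow> (nat \<Rightarrow> int)
    \<Rightarrow> nat \<Rightarrow> (nat list \<Rightarrow> 'm) \<Rightarrow> nat list \<Rightarrow> 'm" where
  "Tact scale \<kappa> l q t i F = (\<lambda>K. \<Sum>J\<in>idx \<kappa> l. scale (hc q t i K J) (F J))"

text \<open>Generators of the kernel of M (x)_C V_t^{(x)l} -> M (x)_{H_l} V_t^{(x)l}:
  (w T_i) (x) v_J - w (x) T_i v_J.\<close>
definition rels :: "(complex \<Rightarrow> 'm::ab_group_add \<Rightarrow> 'm) \<Rightarrow> nat \<Rightarrow> nat \<Rightarrow> complex \<Rightarrow> (nat \<Rightarrow> int)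
    \<Rightarrow> (nat \<Rightarrow> 'm \<Rightarrow> 'm) \<Rightarrow> (nat list \<Rightarrow> 'm) set" where
  "rels scale \<kappa> l q t T =
     {sing J (T i w) - Tact scale \<kappa> l q t i (sing J w) | J w i. J \<in> idx \<kappa> l \<and> 1 \<le> i \<and> i < l}"

definition tensor_kernel :: "(complex \<Rightarrow> 'm::ab_group_add \<Rightarrow> 'm) \<Rightarrow> nat \<Rightarrow> nat \<Rightarrow> complex \<Rightarrow> (nat \<Rightarrow> int)
    \<Rightarrow> (nat \<Rightarrow> 'm \<Rightarrow> 'm) \<Rightarrow> (nat list \<Rightarrow> 'm) set" where
  "tensor_kernel scale \<kappa> l q t T = module.span (fscale scale) (rels scale \<kappa> l q t T)"

definition Xneg :: "nat \<Rightarrow> nat \<Rightarrow> (nat \<Rightarrow> 'm \<Rightarrow> 'm) \<Rightarrow> nat list \<Rightarrow> 'm \<Rightarrow> 'm" where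
  "Xneg \<kappa> l Xinv J w = act_seq (map (\<lambda>i. if J ! (i - 1) = \<kappa> then Xinv i else id) [1..<l+1]) w"

definition shift :: "nat \<Rightarrow> nat list \<Rightarrow> nat list" where
  "shift \<kappa> J = map (\<lambda>j. if j = \<kappa> then 1 else j + 1) J"

definition Psi :: "nat \<Rightarrow> nat \<Rightarrow> (nat \<Rightarrow> 'm::ab_group_add \<Rightarrow> 'm) \<Rightarrow> (nat list \<Rightarrow> 'm) \<Rightarrow> nat list \<Rightarrow> 'm" where
  "Psi \<kappa> l Xinv F = (\<Sum>J\<in>idx \<kappa> l. sing (shift \<kappa> J) (Xneg \<kappa> l Xinv J (F J)))"

text \<open>A right module over the double affine Hecke algebra: complex vector space with linear
  operators giving the right action of generators (w . a = a w); w.(ab) = (w.a).b.\<close>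
definition daha_right_module ::
  "(complex \<Rightarrow> 'm::ab_group_add \<Rightarrow> 'm) \<Rightarrow> complex \<Rightarrow> complex \<Rightarrow> nat \<Rightarrow>
   (nat \<Rightarrow> 'm \<Rightarrow> 'm) \<Rightarrow> (nat \<Rightarrow> 'm \<Rightarrow> 'm) \<Rightarrow> (nat \<Rightarrow> 'm \<Rightarrow> 'm) \<Rightarrow> (nat \<Rightarrow> 'm \<Rightarrow> 'm) \<Rightarrow>
   (nat \<Rightarrow> 'm \<Rightarrow> 'm) \<Rightarrow> (nat \<Rightarrow> 'm \<Rightarrow> 'm) \<Rightarrow> bool" where
  "daha_right_module scale q \<zeta> l T Tinv X Xinv Y Yinv \<longleftrightarrow>
    vector_space scale \<and>
    (\<forall>i. 1 \<le> i \<and> i < l \<longrightarrow> Vector_Spaces.linear scale scale (T i) \<and> Vector_Spaces.linear scale scale (Tinv i)) \<and>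
    (\<forall>j. 1 \<le> j \<and> j \<le> l \<longrightarrow> Vector_Spaces.linear scale scale (X j) \<and> Vector_Spaces.linear scale scale (Xinv j)
        \<and> Vector_Spaces.linear scale scale (Y j) \<and> Vector_Spaces.linear scale scale (Yinv j)) \<and>
    \<comment> \<open>T_i T_i^{-1} = T_i^{-1} T_i = 1, (T_i + 1)(T_i - q^2) = 0\<close>
    (\<forall>i w. 1 \<le> i \<and> i < l \<longrightarrow> Tinv i (T i w) = w \<and> T i (Tinv i w) = w \<and>
        T i (T i w + w) - scale (q^2) (T i w + w) = 0) \<and>
    \<comment> \<open>braid relations\<close>
    (\<forall>i w. 1 \<le> i \<and> i + 1 < l \<longrightarrow> act_seq [T i, T (i+1), T i] w = act_seq [T (i+1), T i, T (i+1)] w) \<and>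
    (\<forall>i j w. 1 \<le> i \<and> i < l \<and> 1 \<le> j \<and> j < l \<and> (i + 1 < j \<or> j + 1 < i) \<longrightarrow> T i (T j w) = T j (T i w)) \<and>
    \<comment> \<open>X's and Y's: commuting, mutually inverse\<close>
    (\<forall>j w. 1 \<le> j \<and> j \<le> l \<longrightarrow> Xinv j (X j w) = w \<and> X j (Xinv j w) = w \<and>
        Yinv j (Y j w) = w \<and> Y j (Yinv j w) = w) \<and>
    (\<forall>j k w. 1 \<le> j \<and> j \<le> l \<and> 1 \<le> k \<and> k \<le> l \<longrightarrow>
        X j (X k w) = X k (X j w) \<and> X j (Xinv k w) = Xinv k (X j w) \<and> Xinv j (Xinv k w) = Xinv k (Xinv j w) \<and>
        Y j (Y k w) = Y k (Y j w) \<and> Y j (Yinv k w) = Yinv k (Y j w) \<and> Yinv j (Yinv k w) = Yinv k (Yinv j w)) \<and>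
    \<comment> \<open>X_0 Y_1 = zeta Y_1 X_0, X_0 = X_1 ... X_l\<close>
    (\<forall>w. act_seq (map X [1..<l+1] @ [Y 1]) w = scale \<zeta> (act_seq (Y 1 # map X [1..<l+1]) w)) \<and>
    \<comment> \<open>T_i X_i T_i = q^2 X_{i+1}, T_i^{-1} Y_i T_i^{-1} = q^{-2} Y_{i+1}\<close>
    (\<forall>i w. 1 \<le> i \<and> i < l \<longrightarrow> act_seq [T i, X i, T i] w = scale (q^2) (X (i+1) w) \<and>
        act_seq [Tinv i, Y i, Tinv i] w = scale (inverse (q^2)) (Y (i+1) w)) \<and>
    \<comment> \<open>X_2 Y_1^{-1} X_2^{-1} Y_1 = q^{-2} T_1^2\<close>
    (2 \<le> l \<longrightarrow> (\<forall>w. act_seq [X 2, Yinv 1, Xinv 2, Y 1] w = scale (inverse (q^2)) (T 1 (T 1 w)))) \<and>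
    \<comment> \<open>X_j T_i = T_i X_j, Y_j T_i = T_i Y_j for j not in {i, i+1}\<close>
    (\<forall>i j w. 1 \<le> i \<and> i < l \<and> 1 \<le> j \<and> j \<le> l \<and> j \<noteq> i \<and> j \<noteq> i + 1 \<longrightarrow>
        T i (X j w) = X j (T i w) \<and> T i (Y j w) = Y j (T i w))"

end

theory Submission
  imports Defs
begin

(* The coefficient of the swapped term squares to q^2, so the
   quadratic Hecke relation expresses the relation at a descent j_i > j_(i+1) through relations at
   the swapped ascent; hence the ascents and ties suffice.  Psi is linear, so it is enough to map
   each of these into the kernel for tau s.  For j_i = j_(i+1) the X-factor X_i^-1 X_(i+1)^-1
   commutes with T_i; for j_i < j_(i+1) < kappa the cyclic shift keeps the pair an ascent and Psi
   maps the relation to a relation.  For j_(i+1) = kappa the shift turns the ascent into a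
   descent, and T_i X_(i+1)^-1 T_i = q^2 X_i^-1 (from T_i X_i T_i = q^2 X_(i+1)) turns the image
   into a multiple of the relation at the swapped index. *)

lemma act_seq_Nil [simp]: "act_seq [] x = x"
  by (simp add: act_seq_def)

lemma act_seq_Cons [simp]: "act_seq (f # fs) x = act_seq fs (f x)"
  by (simp add: act_seq_def)

lemma act_seq_append [simp]: "act_seq (fs @ gs) x = act_seq gs (act_seq fs x)"
  by (simp add: act_seq_def)

lemma act_seq_commute:
  assumes "\<forall>f \<in> set fs. \<forall>x. f (h x) = h (f x)"
  shows "act_seq fs (h x) = h (act_seq fs x)"
  using assms by (induction fs arbitrary: x) auto

lemma act_seq_add:
  assumes "\<forall>f \<in> set fs. \<forall>x y. f (x + y) = f x + f y"
  shows "act_seq fs (x + y) = act_seq fs x + act_seq fs (y :: 'a :: plus)"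
  using assms by (induction fs arbitrary: x y) auto

lemma act_seq_upt_split:
  assumes i: "1 \<le> i" "i < l"
    and comm: "\<And>j k x. j \<in> {1..l} \<Longrightarrow> k \<in> {1..l} \<Longrightarrow> f j (f k x) = f k (f j x)"
  shows "act_seq (map f [1..<l+1]) x = act_seq (map f ([1..<i] @ [i+2..<l+1])) (f (i+1) (f i x))"
proof -
  have "[1..<l+1] = [1..<i] @ [i..<l+1]"
    using i upt_add_eq_append[of 1 i "l+1-i"] by simp
  also have "[i..<l+1] = i # (i+1) # [i+2..<l+1]"
    using i by (simp add: upt_conv_Cons)
  finally have "[1..<l+1] = [1..<i] @ i # (i+1) # [i+2..<l+1]" .
  moreover have "act_seq (map f [1..<i]) (f k x) = f k (act_seq (map f [1..<i]) x)" if "k \<in> {i, i+1}" for k x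
    using that i by (intro act_seq_commute) (auto intro: comm)
  ultimately show ?thesis by simp
qed

lemma finite_idx: "finite (idx \<kappa> l)"
  using finite_lists_length_eq[of "{1..\<kappa>}" l] by (simp add: idx_def conj_commute)

lemma idx_nth: "J \<in> idx \<kappa> l \<Longrightarrow> k < l \<Longrightarrow> J ! k \<in> {1..\<kappa>}"
  unfolding idx_def by (auto dest: nth_mem)

lemma length_swap_at [simp]: "length (swap_at J i) = length J"
  by (simp add: swap_at_def)

lemma nth_swap_at:
  "1 \<le> i \<Longrightarrow> i < length J \<Longrightarrow>
    swap_at J i ! k = (if k = i - 1 then J ! i else if k = i then J ! (i - 1) else J ! k)"
  by (simp add: swap_at_def nth_list_update)

lemma swap_at_idx: "J \<in> idx \<kappa> l \<Longrightarrow> 1 \<le> i \<Longrightarrow> i < l \<Longrightarrow> swap_at J i \<in> idx \<kappa> l"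
  unfolding idx_def swap_at_def
  by (auto dest!: set_update_subset_insert[THEN subsetD] simp: subset_iff)

lemma swap_at_swap_at: "1 \<le> i \<Longrightarrow> i < length J \<Longrightarrow> swap_at (swap_at J i) i = J"
  by (rule nth_equalityI) (auto simp: nth_swap_at)

definition cyc_succ :: "nat \<Rightarrow> nat \<Rightarrow> nat" where
  "cyc_succ \<kappa> j = (if j = \<kappa> then 1 else j + 1)"

lemma shift_eq_map_cyc_succ: "shift \<kappa> J = map (cyc_succ \<kappa>) J"
  by (simp add: shift_def cyc_succ_def[abs_def])

lemma length_shift [simp]: "length (shift \<kappa> J) = length J"
  by (simp add: shift_def)

lemma shift_idx: "J \<in> idx \<kappa> l \<Longrightarrow> shift \<kappa> J \<in> idx \<kappa> l"
  unfolding idx_def shift_def by auto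

lemma shift_swap_at: "1 \<le> i \<Longrightarrow> i < length J \<Longrightarrow> shift \<kappa> (swap_at J i) = swap_at (shift \<kappa> J) i"
  by (simp add: shift_def swap_at_def map_update)

lemma tau_cyc_succ: "j \<in> {1..\<kappa>} \<Longrightarrow> tau \<kappa> s (cyc_succ \<kappa> j) = s j"
  by (auto simp: tau_def cyc_succ_def)

definition swap_coeff :: "complex \<Rightarrow> (nat \<Rightarrow> int) \<Rightarrow> nat \<Rightarrow> nat \<Rightarrow> complex" where
  "swap_coeff q t a b = (-1) ^ nat (par t a * par t b) * q"

lemma swap_coeff_commute: "swap_coeff q t a b = swap_coeff q t b a"
  by (simp add: swap_coeff_def mult.commute)

lemma swap_coeff_squared: "swap_coeff q t a b * swap_coeff q t a b = q^2"
  by (simp add: swap_coeff_def power2_eq_square algebra_simps flip: power_add)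

lemma swap_coeff_tau:
  "a \<in> {1..\<kappa>} \<Longrightarrow> b \<in> {1..\<kappa>} \<Longrightarrow>
    swap_coeff q (tau \<kappa> s) (cyc_succ \<kappa> a) (cyc_succ \<kappa> b) = swap_coeff q s a b"
  by (simp add: swap_coeff_def par_def tau_cyc_succ)

definition hecke_rel :: "(complex \<Rightarrow> 'm::ab_group_add \<Rightarrow> 'm) \<Rightarrow> nat \<Rightarrow> nat \<Rightarrow> complex \<Rightarrow> (nat \<Rightarrow> int)
    \<Rightarrow> (nat \<Rightarrow> 'm \<Rightarrow> 'm) \<Rightarrow> nat \<Rightarrow> nat list \<Rightarrow> 'm \<Rightarrow> nat list \<Rightarrow> 'm" where
  "hecke_rel scale \<kappa> l q t T i J w = sing J (T i w) - Tact scale \<kappa> l q t i (sing J w)"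

lemma rels_eq_hecke_rel:
  "rels scale \<kappa> l q t T = {hecke_rel scale \<kappa> l q t T i J w | J w i. J \<in> idx \<kappa> l \<and> 1 \<le> i \<and> i < l}"
  by (simp add: rels_def hecke_rel_def)

definition ordered_rels :: "(complex \<Rightarrow> 'm::ab_group_add \<Rightarrow> 'm) \<Rightarrow> nat \<Rightarrow> nat \<Rightarrow> complex \<Rightarrow> (nat \<Rightarrow> int)
    \<Rightarrow> (nat \<Rightarrow> 'm \<Rightarrow> 'm) \<Rightarrow> (nat list \<Rightarrow> 'm) set" where
  "ordered_rels scale \<kappa> l q t T = {hecke_rel scale \<kappa> l q t T i J w | J w i.
     J \<in> idx \<kappa> l \<and> 1 \<le> i \<and> i < l \<and> J ! (i - 1) \<le> J ! i}"

locale hecke_module = vector_space scale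
  for scale :: "complex \<Rightarrow> 'm::ab_group_add \<Rightarrow> 'm" +
  fixes l :: nat and q :: complex and T :: "nat \<Rightarrow> 'm \<Rightarrow> 'm"
  assumes T_linear: "1 \<le> i \<Longrightarrow> i < l \<Longrightarrow> Vector_Spaces.linear scale scale (T i)"
    and T_quadratic: "1 \<le> i \<Longrightarrow> i < l \<Longrightarrow> T i (T i w) = scale (q^2 - 1) (T i w) + scale (q^2) w"
    and q_nonzero: "q \<noteq> 0"
begin

sublocale tensor: module "fscale scale"
  by unfold_locales (auto simp: fscale_def fun_eq_iff scale_right_distrib scale_left_distrib)

lemma T_scale: "1 \<le> i \<Longrightarrow> i < l \<Longrightarrow> T i (scale c x) = scale c (T i x)"
  using T_linear unfolding Vector_Spaces.linear_iff by blast

lemma sing_add: "sing K (x + y) = sing K x + sing K (y :: 'm)"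
  by (simp add: sing_def fun_eq_iff)

lemma sing_scale: "sing K (scale c x) = fscale scale c (sing K x)"
  by (simp add: sing_def fscale_def fun_eq_iff)

lemma Tact_sing:
  assumes "K \<in> idx \<kappa> l"
  shows "Tact scale \<kappa> l q t i (sing K y) = (\<lambda>K'. scale (hc q t i K' K) y)"
proof
  fix K'
  have "Tact scale \<kappa> l q t i (sing K y) K' = (\<Sum>J\<in>idx \<kappa> l. if J = K then scale (hc q t i K' K) y else 0)"
    unfolding Tact_def by (rule sum.cong) (auto simp: sing_def)
  then show "Tact scale \<kappa> l q t i (sing K y) K' = scale (hc q t i K' K) y"
    using assms finite_idx by simp
qed

lemma Tact_sing_diag:
  assumes "K \<in> idx \<kappa> l" "K ! (i - 1) = K ! i"
  shows "Tact scale \<kappa> l q t i (sing K y) =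
    fscale scale (of_int (t (K ! i)) * q powi (1 + t (K ! i))) (sing K y)"
  unfolding Tact_sing[OF assms(1)] using assms(2)
  by (auto simp: fun_eq_iff hc_def Let_def fscale_def sing_def)

lemma Tact_sing_less:
  assumes "K \<in> idx \<kappa> l" "1 \<le> i" "i < l" "K ! (i - 1) < K ! i"
  shows "Tact scale \<kappa> l q t i (sing K y) =
    fscale scale (swap_coeff q t (K ! (i - 1)) (K ! i)) (sing (swap_at K i) y)"
  unfolding Tact_sing[OF assms(1)] using assms(2-4)
  by (auto simp: fun_eq_iff hc_def fscale_def sing_def swap_coeff_def)

lemma Tact_sing_greater:
  assumes K: "K \<in> idx \<kappa> l" and i: "1 \<le> i" "i < l" and gt: "K ! i < K ! (i - 1)"
  shows "Tact scale \<kappa> l q t i (sing K y) =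
    fscale scale (swap_coeff q t (K ! (i - 1)) (K ! i)) (sing (swap_at K i) y)
    + fscale scale (q^2 - 1) (sing K y)"
proof -
  have "swap_at K i \<noteq> K"
    using K i gt nth_swap_at[of i K "i - 1"] by (auto simp: idx_def)
  then show ?thesis
    unfolding Tact_sing[OF K] using gt by (auto simp: fun_eq_iff hc_def fscale_def sing_def swap_coeff_def)
qed

lemma hecke_rel_greater:
  fixes t :: "nat \<Rightarrow> int"
  assumes J: "J \<in> idx \<kappa> l" and i: "1 \<le> i" "i < l" and gt: "J ! i < J ! (i - 1)"
  defines "K \<equiv> swap_at J i" and "c \<equiv> swap_coeff q t (J ! i) (J ! (i - 1))"
  shows "hecke_rel scale \<kappa> l q t T i J w = fscale scale (- inverse c)
    (hecke_rel scale \<kappa> l q t T i K (T i w)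
      - fscale scale (q^2 - 1) (hecke_rel scale \<kappa> l q t T i K w))"
proof -
  have lenJ: "length J = l" using J by (simp add: idx_def)
  have K: "K \<in> idx \<kappa> l" using swap_at_idx[OF J i] by (simp add: K_def)
  have K_nth: "K ! (i - 1) = J ! i" "K ! i = J ! (i - 1)" "swap_at K i = J"
    using i lenJ by (simp_all add: K_def nth_swap_at swap_at_swap_at)
  have TK: "Tact scale \<kappa> l q t i (sing K u) = fscale scale c (sing J u)" for u
    using Tact_sing_less[OF K i, of t u] gt unfolding K_nth c_def by simp
  have TJ: "Tact scale \<kappa> l q t i (sing J w) = fscale scale c (sing K w) + fscale scale (q^2 - 1) (sing J w)"
    using Tact_sing_greater[OF J i gt] by (simp add: K_def c_def swap_coeff_commute)
  have cc: "c * c = q^2" by (simp add: c_def swap_coeff_squared)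
  have c0: "c \<noteq> 0" using cc q_nonzero by auto
  have "hecke_rel scale \<kappa> l q t T i K (T i w) - fscale scale (q^2 - 1) (hecke_rel scale \<kappa> l q t T i K w)
      = fscale scale (- c) (hecke_rel scale \<kappa> l q t T i J w)"
    unfolding hecke_rel_def TK TJ T_quadratic[OF i] sing_add sing_scale
    by (simp add: algebra_simps cc)
  then show ?thesis
    using c0 by simp
qed

lemma hecke_rel_in_tensor_kernel:
  "K \<in> idx \<kappa> l \<Longrightarrow> 1 \<le> i \<Longrightarrow> i < l \<Longrightarrow>
    hecke_rel scale \<kappa> l q t T i K y \<in> tensor_kernel scale \<kappa> l q t T"
  unfolding tensor_kernel_def rels_eq_hecke_rel by (rule tensor.span_base) blast

lemma tensor_kernel_eq_span_ordered_rels: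
  "tensor_kernel scale \<kappa> l q t T = tensor.span (ordered_rels scale \<kappa> l q t T)"
proof
  show "tensor.span (ordered_rels scale \<kappa> l q t T) \<subseteq> tensor_kernel scale \<kappa> l q t T"
    unfolding tensor_kernel_def rels_eq_hecke_rel ordered_rels_def
    by (rule tensor.span_mono) blast
  have "hecke_rel scale \<kappa> l q t T i J w \<in> tensor.span (ordered_rels scale \<kappa> l q t T)"
    if J: "J \<in> idx \<kappa> l" and i: "1 \<le> i" "i < l" for J i w
  proof (cases "J ! (i - 1) \<le> J ! i")
    case True
    then show ?thesis
      using J i unfolding ordered_rels_def by (intro tensor.span_base) blast
  next
    case False
    have "length J = l" using J by (simp add: idx_def)
    then have "hecke_rel scale \<kappa> l q t T i (swap_at J i) u \<in> ordered_rels scale \<kappa> l q t T" for u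
      using swap_at_idx[OF J i] i False unfolding ordered_rels_def by (fastforce simp: nth_swap_at)
    moreover have gt: "J ! i < J ! (i - 1)" using False by simp
    ultimately show ?thesis
      unfolding hecke_rel_greater[OF J i gt] by (intro tensor.span_scale tensor.span_diff tensor.span_base)
  qed
  then show "tensor_kernel scale \<kappa> l q t T \<subseteq> tensor.span (ordered_rels scale \<kappa> l q t T)"
    unfolding tensor_kernel_def rels_eq_hecke_rel
    by (intro tensor.span_minimal tensor.subspace_span) blast
qed

end

definition Xinv_factor :: "nat \<Rightarrow> (nat \<Rightarrow> 'm \<Rightarrow> 'm) \<Rightarrow> nat list \<Rightarrow> nat \<Rightarrow> 'm \<Rightarrow> 'm" where
  "Xinv_factor \<kappa> Xinv J k = (if J ! (k - 1) = \<kappa> then Xinv k else id)"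

definition Xneg_except :: "nat \<Rightarrow> nat \<Rightarrow> (nat \<Rightarrow> 'm \<Rightarrow> 'm) \<Rightarrow> nat list \<Rightarrow> nat \<Rightarrow> 'm \<Rightarrow> 'm" where
  "Xneg_except \<kappa> l Xinv J i = act_seq (map (Xinv_factor \<kappa> Xinv J) ([1..<i] @ [i+2..<l+1]))"

lemma Xneg_eq_act_seq: "Xneg \<kappa> l Xinv J = act_seq (map (Xinv_factor \<kappa> Xinv J) [1..<l+1])"
  unfolding Xneg_def Xinv_factor_def by (rule ext) (rule refl)

lemma Xneg_except_swap_at: "1 \<le> i \<Longrightarrow> Xneg_except \<kappa> l Xinv (swap_at J i) i = Xneg_except \<kappa> l Xinv J i"
  unfolding Xneg_except_def Xinv_factor_def
  by (rule arg_cong[where f = act_seq]) (auto simp: swap_at_def nth_list_update)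

locale daha_module =
  fixes scale :: "complex \<Rightarrow> 'm::ab_group_add \<Rightarrow> 'm"
    and l :: nat and q \<zeta> :: complex and T Tinv X Xinv Y Yinv :: "nat \<Rightarrow> 'm \<Rightarrow> 'm"
  assumes daha: "daha_right_module scale q \<zeta> l T Tinv X Xinv Y Yinv"
    and q_nonzero: "q \<noteq> 0"
begin

lemma Tinv_T: "1 \<le> i \<Longrightarrow> i < l \<Longrightarrow> Tinv i (T i w) = w"
  using daha unfolding daha_right_module_def by blast

lemma Tinv_scale: "1 \<le> i \<Longrightarrow> i < l \<Longrightarrow> Tinv i (scale c w) = scale c (Tinv i w)"
  using daha unfolding daha_right_module_def Vector_Spaces.linear_iff by simp

lemma Xinv_linear: "1 \<le> j \<Longrightarrow> j \<le> l \<Longrightarrow> Vector_Spaces.linear scale scale (Xinv j)"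
  using daha unfolding daha_right_module_def by simp

lemma Xinv_add: "1 \<le> j \<Longrightarrow> j \<le> l \<Longrightarrow> Xinv j (x + y) = Xinv j x + Xinv j y"
  using Xinv_linear unfolding Vector_Spaces.linear_iff by blast

lemma Xinv_scale: "1 \<le> j \<Longrightarrow> j \<le> l \<Longrightarrow> Xinv j (scale c x) = scale c (Xinv j x)"
  using Xinv_linear unfolding Vector_Spaces.linear_iff by blast

lemma X_Xinv: "1 \<le> j \<Longrightarrow> j \<le> l \<Longrightarrow> X j (Xinv j w) = w"
  using daha unfolding daha_right_module_def by blast

lemma Xinv_X: "1 \<le> j \<Longrightarrow> j \<le> l \<Longrightarrow> Xinv j (X j w) = w"
  using daha unfolding daha_right_module_def by blast

lemma Xinv_commute: "1 \<le> j \<Longrightarrow> j \<le> l \<Longrightarrow> 1 \<le> k \<Longrightarrow> k \<le> l \<Longrightarrow> Xinv j (Xinv k w) = Xinv k (Xinv j w)"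
  using daha unfolding daha_right_module_def by blast

lemma T_X_T: "1 \<le> i \<Longrightarrow> i < l \<Longrightarrow> T i (X i (T i w)) = scale (q^2) (X (i+1) w)"
  using daha unfolding daha_right_module_def by simp

lemma T_Xinv_commute:
  assumes "1 \<le> i" "i < l" "1 \<le> j" "j \<le> l" "j \<noteq> i" "j \<noteq> i + 1"
  shows "T i (Xinv j w) = Xinv j (T i w)"
proof -
  have "T i (X j w') = X j (T i w')" for w'
    using daha assms unfolding daha_right_module_def by blast
  then show ?thesis
    by (metis X_Xinv Xinv_X assms(3,4))
qed

lemma hecke_module: "hecke_module scale l q T"
proof -
  have vs: "vector_space scale"
    using daha unfolding daha_right_module_def by simp
  interpret vector_space scale by (rule vs)
  show ?thesis
  proof (intro hecke_module.intro hecke_module_axioms.intro vs q_nonzero)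
    fix i w assume i: "1 \<le> i" "i < l"
    then show T_lin: "Vector_Spaces.linear scale scale (T i)"
      using daha unfolding daha_right_module_def by simp
    have "T i (T i w + w) - scale (q^2) (T i w + w) = 0"
      using daha i unfolding daha_right_module_def by blast
    then show "T i (T i w) = scale (q^2 - 1) (T i w) + scale (q^2) w"
      using T_lin unfolding Vector_Spaces.linear_iff by (simp add: algebra_simps)
  qed
qed

sublocale hecke_module scale l q T
  by (rule hecke_module)

lemma T_Xinv_T:
  assumes i: "1 \<le> i" "i < l"
  shows "T i (Xinv (i+1) (T i z)) = scale (q^2) (Xinv i z)"
proof -
  have "X i (T i (Xinv (i+1) (T i z))) = Tinv i (T i (X i (T i (Xinv (i+1) (T i z)))))"
    using Tinv_T i by simp
  also have "\<dots> = scale (q^2) z"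
    using i by (simp add: T_X_T X_Xinv Tinv_scale Tinv_T)
  finally show ?thesis
    using i by (metis Xinv_X Xinv_scale less_imp_le_nat)
qed

lemma T_commute_Xinv_pair:
  assumes i: "1 \<le> i" "i < l"
  shows "T i (Xinv (i+1) (Xinv i z)) = Xinv (i+1) (Xinv i (T i z))"
proof -
  have Xinv_i: "Xinv i u = scale (inverse (q^2)) (T i (Xinv (i+1) (T i u)))" for u
    using T_Xinv_T[OF i, of u] q_nonzero by simp
  have "T i (Xinv (i+1) (Xinv i z)) = scale (inverse (q^2)) (T i (Xinv (i+1) (T i (Xinv (i+1) (T i z)))))"
    using i by (simp add: Xinv_i[of z] Xinv_scale T_scale)
  also have "\<dots> = Xinv i (Xinv (i+1) (T i z))"
    by (rule Xinv_i[symmetric])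
  also have "\<dots> = Xinv (i+1) (Xinv i (T i z))"
    using i Xinv_commute by simp
  finally show ?thesis .
qed

lemma Xinv_factor_add:
  "1 \<le> k \<Longrightarrow> k \<le> l \<Longrightarrow>
    Xinv_factor \<kappa> Xinv J k (x + y) = Xinv_factor \<kappa> Xinv J k x + Xinv_factor \<kappa> Xinv J k y"
  by (simp add: Xinv_factor_def Xinv_add)

lemma Xinv_factor_scale:
  "1 \<le> k \<Longrightarrow> k \<le> l \<Longrightarrow>
    Xinv_factor \<kappa> Xinv J k (scale c x) = scale c (Xinv_factor \<kappa> Xinv J k x)"
  by (simp add: Xinv_factor_def Xinv_scale)

lemma Xneg_split:
  assumes "1 \<le> i" "i < l"
  shows "Xneg \<kappa> l Xinv J w =
    Xneg_except \<kappa> l Xinv J i (Xinv_factor \<kappa> Xinv J (i+1) (Xinv_factor \<kappa> Xinv J i w))"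
  unfolding Xneg_eq_act_seq Xneg_except_def
  by (rule act_seq_upt_split[OF assms]) (auto simp: Xinv_factor_def Xinv_commute)

lemma Xneg_except_scale:
  "i < l \<Longrightarrow> Xneg_except \<kappa> l Xinv J i (scale c x) = scale c (Xneg_except \<kappa> l Xinv J i x)"
  unfolding Xneg_except_def by (rule act_seq_commute) (auto simp: Xinv_factor_scale)

lemma Xneg_except_T:
  "1 \<le> i \<Longrightarrow> i < l \<Longrightarrow>
    Xneg_except \<kappa> l Xinv J i (T i x) = T i (Xneg_except \<kappa> l Xinv J i x)"
  unfolding Xneg_except_def by (rule act_seq_commute) (auto simp: Xinv_factor_def T_Xinv_commute)

lemma Xneg_add: "Xneg \<kappa> l Xinv J (x + y) = Xneg \<kappa> l Xinv J x + Xneg \<kappa> l Xinv J y"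
  unfolding Xneg_eq_act_seq by (rule act_seq_add) (auto simp: Xinv_factor_add)

lemma Xneg_scale: "Xneg \<kappa> l Xinv J (scale c x) = scale c (Xneg \<kappa> l Xinv J x)"
  unfolding Xneg_eq_act_seq by (rule act_seq_commute) (auto simp: Xinv_factor_scale)

lemma Xneg_zero: "Xneg \<kappa> l Xinv J 0 = 0"
  using Xneg_scale[of \<kappa> J 0 0] by simp

lemma Xneg_T_commute:
  assumes i: "1 \<le> i" "i < l" and eq: "J ! (i - 1) = J ! i"
  shows "Xneg \<kappa> l Xinv J (T i w) = T i (Xneg \<kappa> l Xinv J w)"
proof -
  have "Xinv_factor \<kappa> Xinv J (i+1) (Xinv_factor \<kappa> Xinv J i (T i w)) =
      T i (Xinv_factor \<kappa> Xinv J (i+1) (Xinv_factor \<kappa> Xinv J i w))"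
    using eq T_commute_Xinv_pair[OF i] by (simp add: Xinv_factor_def)
  then show ?thesis
    using i by (simp add: Xneg_split Xneg_except_T)
qed

lemma Psi_module_hom: "module_hom (fscale scale) (fscale scale) (Psi \<kappa> l Xinv)"
  unfolding module_hom_iff
proof (intro conjI allI tensor.module_axioms)
  show "Psi \<kappa> l Xinv (F + G) = Psi \<kappa> l Xinv F + Psi \<kappa> l Xinv G" for F G
    by (simp add: Psi_def Xneg_add sing_add sum.distrib)
  show "Psi \<kappa> l Xinv (fscale scale c F) = fscale scale c (Psi \<kappa> l Xinv F)" for c F
    by (simp add: Psi_def tensor.scale_sum_right fscale_def[of scale c F] Xneg_scale sing_scale)
qed

lemmas Psi_diff = module_hom.diff[OF Psi_module_hom]
  and Psi_scale = module_hom.scale[OF Psi_module_hom]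

lemma Psi_sing:
  assumes "J \<in> idx \<kappa> l"
  shows "Psi \<kappa> l Xinv (sing J x) = sing (shift \<kappa> J) (Xneg \<kappa> l Xinv J x)"
proof -
  have "Psi \<kappa> l Xinv (sing J x) = (\<Sum>K\<in>idx \<kappa> l. if K = J then sing (shift \<kappa> J) (Xneg \<kappa> l Xinv J x) else 0)"
    unfolding Psi_def by (rule sum.cong) (auto simp: sing_def fun_eq_iff Xneg_zero)
  then show ?thesis
    using assms finite_idx by simp
qed

lemma Psi_hecke_rel_diag:
  assumes J: "J \<in> idx \<kappa> l" and i: "1 \<le> i" "i < l" and eq: "J ! (i - 1) = J ! i"
  shows "Psi \<kappa> l Xinv (hecke_rel scale \<kappa> l q s T i J w) =
    hecke_rel scale \<kappa> l q (tau \<kappa> s) T i (shift \<kappa> J) (Xneg \<kappa> l Xinv J w)"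
proof -
  have len: "length J = l" using J by (simp add: idx_def)
  have P: "shift \<kappa> J \<in> idx \<kappa> l" using J by (rule shift_idx)
  have P_eq: "shift \<kappa> J ! (i - 1) = shift \<kappa> J ! i"
    using eq i len by (simp add: shift_eq_map_cyc_succ)
  have tau_P: "tau \<kappa> s (shift \<kappa> J ! i) = s (J ! i)"
    using i len idx_nth[OF J i(2)] by (simp add: shift_eq_map_cyc_succ tau_cyc_succ)
  show ?thesis
    unfolding hecke_rel_def Tact_sing_diag[OF J eq] Tact_sing_diag[OF P P_eq] tau_P
    by (simp add: Psi_diff Psi_scale Psi_sing[OF J] Xneg_T_commute[OF i eq])
qed

lemma Psi_hecke_rel_less:
  assumes J: "J \<in> idx \<kappa> l" and i: "1 \<le> i" "i < l"
    and lt: "J ! (i - 1) < J ! i" and no_wrap: "J ! i \<noteq> \<kappa>"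
  shows "Psi \<kappa> l Xinv (hecke_rel scale \<kappa> l q s T i J w) =
    hecke_rel scale \<kappa> l q (tau \<kappa> s) T i (shift \<kappa> J) (Xneg_except \<kappa> l Xinv J i w)"
proof -
  have len: "length J = l" using J by (simp add: idx_def)
  have range: "J ! (i - 1) \<in> {1..\<kappa>}" "J ! i \<in> {1..\<kappa>}"
    using i idx_nth[OF J] by auto
  have P: "shift \<kappa> J \<in> idx \<kappa> l" using J by (rule shift_idx)
  have sw: "swap_at J i \<in> idx \<kappa> l" using J i by (rule swap_at_idx)
  have P_nth: "shift \<kappa> J ! (i - 1) = cyc_succ \<kappa> (J ! (i - 1))" "shift \<kappa> J ! i = cyc_succ \<kappa> (J ! i)"
    using i len by (simp_all add: shift_eq_map_cyc_succ)
  have P_lt: "shift \<kappa> J ! (i - 1) < shift \<kappa> J ! i"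
    unfolding P_nth using lt no_wrap range by (simp add: cyc_succ_def)
  have XJ: "Xneg \<kappa> l Xinv J u = Xneg_except \<kappa> l Xinv J i u" for u
    using Xneg_split[OF i] lt no_wrap range by (simp add: Xinv_factor_def)
  have Xsw: "Xneg \<kappa> l Xinv (swap_at J i) u = Xneg_except \<kappa> l Xinv J i u" for u
    using Xneg_split[OF i] lt no_wrap range i len
    by (simp add: Xinv_factor_def nth_swap_at Xneg_except_swap_at)
  show ?thesis
    unfolding hecke_rel_def Tact_sing_less[OF J i lt] Tact_sing_less[OF P i P_lt] P_nth
    using i len range
    by (simp add: Psi_diff Psi_scale Psi_sing[OF J] Psi_sing[OF sw] shift_swap_at XJ Xsw
        Xneg_except_T swap_coeff_tau)
qed

lemma Psi_hecke_rel_less_wrap: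
  fixes s :: "nat \<Rightarrow> int"
  assumes J: "J \<in> idx \<kappa> l" and i: "1 \<le> i" "i < l"
    and lt: "J ! (i - 1) < J ! i" and wrap: "J ! i = \<kappa>"
  defines "c \<equiv> swap_coeff q s (J ! (i - 1)) \<kappa>"
  shows "Psi \<kappa> l Xinv (hecke_rel scale \<kappa> l q s T i J w) = fscale scale (- c / q^2)
    (hecke_rel scale \<kappa> l q (tau \<kappa> s) T i (swap_at (shift \<kappa> J) i)
      (Xneg_except \<kappa> l Xinv J i (Xinv (i+1) (T i w))))"
proof -
  define R where "R = Xneg_except \<kappa> l Xinv J i"
  define y where "y = R (Xinv (i+1) (T i w))"
  define Q where "Q = swap_at (shift \<kappa> J) i"
  have len: "length J = l" using J by (simp add: idx_def)
  have range: "J ! (i - 1) \<in> {1..\<kappa>}" "J ! i \<in> {1..\<kappa>}"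
    using i idx_nth[OF J] by auto
  have sw: "swap_at J i \<in> idx \<kappa> l" using J i by (rule swap_at_idx)
  have Q: "Q \<in> idx \<kappa> l" using swap_at_idx[OF shift_idx[OF J] i] by (simp add: Q_def)
  have Q_nth: "Q ! (i - 1) = cyc_succ \<kappa> \<kappa>" "Q ! i = cyc_succ \<kappa> (J ! (i - 1))"
    using i len wrap by (simp_all add: Q_def nth_swap_at shift_eq_map_cyc_succ)
  have Q_lt: "Q ! (i - 1) < Q ! i"
    unfolding Q_nth using lt wrap range by (simp add: cyc_succ_def)
  have QQ: "swap_at Q i = shift \<kappa> J"
    using i len by (simp add: Q_def swap_at_swap_at)
  have coeff: "swap_coeff q (tau \<kappa> s) (Q ! (i - 1)) (Q ! i) = c"
    unfolding Q_nth c_def using range wrap by (simp add: swap_coeff_tau swap_coeff_commute)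
  have cc: "c * c = q^2" by (simp add: c_def swap_coeff_squared)
  have XJ: "Xneg \<kappa> l Xinv J u = R (Xinv (i+1) u)" for u
    using Xneg_split[OF i] lt wrap by (simp add: Xinv_factor_def R_def)
  have "Xneg \<kappa> l Xinv (swap_at J i) w = R (Xinv i w)"
    using Xneg_split[OF i] lt wrap i len
    by (auto simp: Xinv_factor_def nth_swap_at Xneg_except_swap_at R_def)
  also have "Xinv i w = scale (inverse (q^2)) (T i (Xinv (i+1) (T i w)))"
    using T_Xinv_T[OF i, of w] q_nonzero by simp
  finally have Xsw: "Xneg \<kappa> l Xinv (swap_at J i) w = scale (inverse (q^2)) (T i y)"
    using i by (simp add: R_def y_def Xneg_except_scale Xneg_except_T)
  have "Psi \<kappa> l Xinv (hecke_rel scale \<kappa> l q s T i J w) =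
      sing (shift \<kappa> J) y - fscale scale (c / q^2) (sing Q (T i y))"
    unfolding hecke_rel_def Tact_sing_less[OF J i lt] using i len
    by (simp add: Psi_diff Psi_scale Psi_sing[OF J] Psi_sing[OF sw] shift_swap_at XJ Xsw sing_scale
        wrap divide_inverse mult.commute c_def y_def Q_def)
  also have "\<dots> = fscale scale (- c / q^2) (hecke_rel scale \<kappa> l q (tau \<kappa> s) T i Q y)"
    unfolding hecke_rel_def Tact_sing_less[OF Q i Q_lt] QQ coeff using cc q_nonzero
    by (simp add: algebra_simps power2_eq_square)
  finally show ?thesis
    by (simp only: Q_def y_def R_def)
qed

lemma Psi_ordered_rels:
  "Psi \<kappa> l Xinv ` ordered_rels scale \<kappa> l q s T \<subseteq> tensor_kernel scale \<kappa> l q (tau \<kappa> s) T"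
proof
  fix F assume "F \<in> Psi \<kappa> l Xinv ` ordered_rels scale \<kappa> l q s T"
  then obtain J i w where F: "F = Psi \<kappa> l Xinv (hecke_rel scale \<kappa> l q s T i J w)"
    and J: "J \<in> idx \<kappa> l" and i: "1 \<le> i" "i < l" and le: "J ! (i - 1) \<le> J ! i"
    unfolding ordered_rels_def by blast
  have P: "shift \<kappa> J \<in> idx \<kappa> l" using J by (rule shift_idx)
  have Q: "swap_at (shift \<kappa> J) i \<in> idx \<kappa> l" using P i by (rule swap_at_idx)
  consider (diag) "J ! (i - 1) = J ! i"
    | (less) "J ! (i - 1) < J ! i" "J ! i \<noteq> \<kappa>"
    | (wrap) "J ! (i - 1) < J ! i" "J ! i = \<kappa>"
    using le by linarith
  then show "F \<in> tensor_kernel scale \<kappa> l q (tau \<kappa> s) T"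
  proof cases
    case diag
    show ?thesis
      unfolding F Psi_hecke_rel_diag[OF J i diag] by (rule hecke_rel_in_tensor_kernel[OF P i])
  next
    case less
    show ?thesis
      unfolding F Psi_hecke_rel_less[OF J i less] by (rule hecke_rel_in_tensor_kernel[OF P i])
  next
    case wrap
    show ?thesis
      unfolding F Psi_hecke_rel_less_wrap[OF J i wrap]
      using hecke_rel_in_tensor_kernel[OF Q i] unfolding tensor_kernel_def by (rule tensor.span_scale)
  qed
qed

lemma Psi_tensor_kernel:
  assumes "F \<in> tensor_kernel scale \<kappa> l q s T"
  shows "Psi \<kappa> l Xinv F \<in> tensor_kernel scale \<kappa> l q (tau \<kappa> s) T"
proof -
  have "Psi \<kappa> l Xinv F \<in> Psi \<kappa> l Xinv ` tensor.span (ordered_rels scale \<kappa> l q s T)"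
    using assms by (simp add: tensor_kernel_eq_span_ordered_rels)
  also have "\<dots> = tensor.span (Psi \<kappa> l Xinv ` ordered_rels scale \<kappa> l q s T)"
    by (rule module_hom.span_image[OF Psi_module_hom, symmetric])
  also have "\<dots> \<subseteq> tensor_kernel scale \<kappa> l q (tau \<kappa> s) T"
    by (rule tensor.span_minimal[OF Psi_ordered_rels]) (simp add: tensor_kernel_def)
  finally show ?thesis .
qed

end

theorem lemma4p2:
  fixes scale :: "complex \<Rightarrow> 'm::ab_group_add \<Rightarrow> 'm"
    and m n \<kappa> l :: nat and q \<zeta> :: complex and s :: "nat \<Rightarrow> int"
    and T Tinv X Xinv Y Yinv :: "nat \<Rightarrow> 'm \<Rightarrow> 'm"
  assumes "m \<noteq> n" and "\<kappa> = m + n"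
    and "q \<noteq> 0" and "\<forall>k::nat. k > 0 \<longrightarrow> q ^ k \<noteq> 1"
    and "\<zeta> \<noteq> 0" and "l \<ge> 1"
    and "parity_seq \<kappa> m s"
    and "daha_right_module scale q \<zeta> l T Tinv X Xinv Y Yinv"
  shows "\<forall>F \<in> tensor_kernel scale \<kappa> l q s T.
           Psi \<kappa> l Xinv F \<in> tensor_kernel scale \<kappa> l q (tau \<kappa> s) T"
proof -
  interpret daha_module scale l q \<zeta> T Tinv X Xinv Y Yinv
    using assms(3,8) by (simp add: daha_module_def)
  show ?thesis
    using Psi_tensor_kernel by blast
qed

end
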